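(* Consider the Estimation phase of the ENE algorithm described in the context, and fix an agent $n$. Let $E_n^{j,1,M+1}$ be the event $\left|\bar r_n^{j,1,M+1}-\mathbb E\,\bar r_n^{j,1,M+1}\right|>2^{-N-4}\,\mathbb E\,\bar r_n^{j,1,M+1}$. Then $\mathbb P(E_n^{j,1,M+1})=O\left(\exp(-j^{1.4})\right)$ as $j\to\infty$.
   Context: Model. $N$ agents share $M$ resources. Time is slotted. The load of an agent accessing a resource is the number of agents (including itself) accessing the same resource at the same time. Each agent $n$ has a utility $U_{n,1,1}\in[0,U_{\max}]$ for resource 1, constant in time; its utility on resource 1 with load $\ell$ is $U_{n,1,\ell}=U_{n,1,1}/\ell$. An agent accessing a resource observes the reward equal to its utility plus noise $\nu$, where $\nu$ is zero-mean sub-Gaussian with variance proxy $b$, i.i.d. over time and agents. Block $M+1$ of the Estimation phase of the ENE algorithm: time is divided into epochs $i=1,2,\dots$, and in epoch $i$ this block has $i$ time steps. At each such time step each agent independently accesses resource 1 with probability $1/2$ and otherwise accesses no resource. $\bar r_n^{j,1,M+1}$ is the average of agent $n$'s rewards over all time steps of this block in epochs $1,\dots,j$ in which agent $n$ accessed resource 1. *)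

theory Defs
  imports "HOL-Probability.Probability" "HOL-Library.Landau_Symbols"
begin

text \<open>Time steps of block M+1 are enumerated consecutively over epochs: epoch i
  occupies the steps t with i(i-1)/2 \<le> t < i(i+1)/2, so epochs 1..j are the
  steps t < j(j+1)/2.\<close>
definition steps_upto :: "nat \<Rightarrow> nat" where
  "steps_upto j = j * (j + 1) div 2"

definition subgaussian :: "'a measure \<Rightarrow> ('a \<Rightarrow> real) \<Rightarrow> real \<Rightarrow> bool" where
  "subgaussian M X b \<longleftrightarrow> integrable M X \<and> integral\<^sup>L M X = 0 \<and>
     (\<forall>s::real. integrable M (\<lambda>\<omega>. exp (s * X \<omega>)) \<and>
        integral\<^sup>L M (\<lambda>\<omega>. exp (s * X \<omega>)) \<le> exp (s\<^sup>2 * b / 2))"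

definition load :: "nat \<Rightarrow> (nat \<Rightarrow> nat \<Rightarrow> 'a \<Rightarrow> bool) \<Rightarrow> nat \<Rightarrow> 'a \<Rightarrow> nat" where
  "load N A t \<omega> = card {k. k < N \<and> A t k \<omega>}"

text \<open>Average reward of agent n over the steps of block M+1 in epochs 1..j in
  which n accessed resource 1 (reward = U/load + noise). Convention: 0 if there
  is no such step (division by zero is 0 in Isabelle).\<close>
definition rbar :: "nat \<Rightarrow> nat \<Rightarrow> real \<Rightarrow> (nat \<Rightarrow> nat \<Rightarrow> 'a \<Rightarrow> bool) \<Rightarrow>
    (nat \<Rightarrow> nat \<Rightarrow> 'a \<Rightarrow> real) \<Rightarrow> nat \<Rightarrow> 'a \<Rightarrow> real" where
  "rbar N n U A \<nu> j \<omega> =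
     (let S = {t. t < steps_upto j \<and> A t n \<omega>}
      in (\<Sum>t\<in>S. U / real (load N A t \<omega>) + \<nu> t n \<omega>) / real (card S))"

end

theory Submission
  imports Defs "HOL-Real_Asymp.Real_Asymp"
begin

text \<open>
  Let a_t indicate that agent n accesses resource 1 at step t, y_t = a_t U / load_t be its utility,
  z_t = a_t nu_t its noise, and mu = 2 E y_t. With S = sum_t a_t over the T = j (j + 1) / 2 steps
  of epochs 1..j and W_t = y_t - mu a_t, the average reward is rbar = mu + (sum_t W_t + sum_t z_t) / S
  whenever S > 0. Since W_t + z_t vanishes unless a_t = 1, the summand (W_t + z_t) / S equals
  (W_t + z_t) / (1 + R_t) with R_t = sum_(s ~= t) a_s, which is independent of W_t + z_t; hence
  E rbar = mu P(S > 0). The variables 1/2 - a_t, W_t and z_t are independent over t and sub-Gaussian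
  (the first two by Hoeffding's lemma), so outside an event of probability exp(-Omega(T)) we have
  S > T / 4 and |sum_t W_t|, |sum_t z_t| < eps mu T / 32, which keeps rbar within relative error eps
  of its mean. Finally exp(-Omega(j^2)) is O(exp(-j^1.4)).
\<close>

section \<open>Sub-Gaussian random variables\<close>

lemma subgaussian_mono:
  assumes "subgaussian M X b" and "b \<le> b'"
  shows "subgaussian M X b'"
proof -
  have "exp (s\<^sup>2 * b / 2) \<le> exp (s\<^sup>2 * b' / 2)" for s :: real
    using assms(2) by (simp add: mult_left_mono)
  with assms(1) show ?thesis
    unfolding subgaussian_def by (meson order_trans)
qed

lemma subgaussian_uminus:
  assumes "subgaussian M X b"
  shows "subgaussian M (\<lambda>x. - X x) b"
  unfolding subgaussian_def
proof (intro conjI allI)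
  show "integrable M (\<lambda>x. - X x)" "integral\<^sup>L M (\<lambda>x. - X x) = 0"
    using assms by (simp_all add: subgaussian_def)
  fix s :: real
  have "integrable M (\<lambda>x. exp ((- s) * X x)) \<and> integral\<^sup>L M (\<lambda>x. exp ((- s) * X x)) \<le> exp ((- s)\<^sup>2 * b / 2)"
    using assms unfolding subgaussian_def by blast
  then show "integrable M (\<lambda>x. exp (s * - X x))"
    and "integral\<^sup>L M (\<lambda>x. exp (s * - X x)) \<le> exp (s\<^sup>2 * b / 2)"
    by simp_all
qed

lemma subgaussian_nn_integral_mgf:
  assumes "subgaussian M X b"
  shows "(\<integral>\<^sup>+x. ennreal (exp (s * X x)) \<partial>M) \<le> ennreal (exp (s\<^sup>2 * b / 2))"
proof -
  have "integrable M (\<lambda>x. exp (s * X x))" "integral\<^sup>L M (\<lambda>x. exp (s * X x)) \<le> exp (s\<^sup>2 * b / 2)"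
    using assms unfolding subgaussian_def by blast+
  then show ?thesis
    by (simp add: nn_integral_eq_integral ennreal_leI)
qed

lemma (in interval_bounded_random_variable) Hoeffdings_lemma_nn_integral_all:
  "(\<integral>\<^sup>+x. ennreal (exp (s * (f x - expectation f))) \<partial>M) \<le> ennreal (exp (s\<^sup>2 * (b - a)\<^sup>2 / 8))"
proof -
  consider "0 < s" | "s = 0" | "s < 0"
    by linarith
  then show ?thesis
  proof cases
    case 1
    then show ?thesis
      by (rule Hoeffdings_lemma_nn_integral)
  next
    case 2
    then show ?thesis
      by (simp add: emeasure_space_1)
  next
    case 3
    interpret neg: interval_bounded_random_variable M "\<lambda>x. - f x" "- b" "- a"
      by unfold_locales (auto intro: eventually_mono[OF AE_in_interval])
    have "(\<integral>\<^sup>+x. ennreal (exp (s * (f x - expectation f))) \<partial>M)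
        = (\<integral>\<^sup>+x. ennreal (exp ((- s) * (- f x - expectation (\<lambda>x. - f x)))) \<partial>M)"
      by (simp add: algebra_simps)
    also have "\<dots> \<le> ennreal (exp ((- s)\<^sup>2 * (- a - - b)\<^sup>2 / 8))"
      using 3 by (intro neg.Hoeffdings_lemma_nn_integral) auto
    finally show ?thesis
      by (simp add: power2_eq_square algebra_simps)
  qed
qed

context prob_space
begin

lemma subgaussian_nonneg:
  assumes "subgaussian M X b"
  shows "0 \<le> b"
proof -
  have X: "integrable M X" "expectation X = 0"
    and mgf: "integrable M (\<lambda>x. exp (1 * X x))" "expectation (\<lambda>x. exp (1 * X x)) \<le> exp (1\<^sup>2 * b / 2)"
    using assms unfolding subgaussian_def by blast+
  have "1 = expectation (\<lambda>x. 1 + X x)"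
    using X by (simp add: prob_space)
  also have "\<dots> \<le> expectation (\<lambda>x. exp (1 * X x))"
    using X mgf by (intro integral_mono) auto
  also have "\<dots> \<le> exp (b / 2)"
    using mgf by simp
  finally show ?thesis
    by simp
qed

lemma subgaussianI_nn_integral:
  assumes "random_variable borel X" and "integrable M X" and "expectation X = 0"
    and mgf: "\<And>s. (\<integral>\<^sup>+x. ennreal (exp (s * X x)) \<partial>M) \<le> ennreal (exp (s\<^sup>2 * b / 2))"
  shows "subgaussian M X b"
proof -
  have "integrable M (\<lambda>x. exp (s * X x))"
    and "expectation (\<lambda>x. exp (s * X x)) \<le> exp (s\<^sup>2 * b / 2)" for s
  proof -
    have "(\<integral>\<^sup>+x. ennreal (exp (s * X x)) \<partial>M) < \<infinity>"
      using mgf[of s] by (simp add: le_less_trans)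
    then show int: "integrable M (\<lambda>x. exp (s * X x))"
      using assms(1) by (intro integrableI_nonneg) auto
    show "expectation (\<lambda>x. exp (s * X x)) \<le> exp (s\<^sup>2 * b / 2)"
      using mgf[of s] by (simp add: nn_integral_eq_integral[OF int])
  qed
  with assms(2,3) show ?thesis
    unfolding subgaussian_def by blast
qed

lemma subgaussian_bounded_centered:
  assumes [measurable]: "random_variable borel X"
    and bounded: "\<And>x. x \<in> space M \<Longrightarrow> X x \<in> {a..b}"
  shows "subgaussian M (\<lambda>x. X x - expectation X) ((b - a)\<^sup>2 / 4)"
proof -
  interpret interval_bounded_random_variable M X a b
    by unfold_locales (use bounded in auto)
  show ?thesis
    using Hoeffdings_lemma_nn_integral_all
    by (intro subgaussianI_nn_integral) (auto simp: expectation_shift integrable power2_eq_square)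
qed

lemma subgaussian_indep_indicator_mult:
  assumes indep: "indep_var borel (\<lambda>x. of_bool (P x)) borel Y"
    and Y: "subgaussian M Y b"
  shows "subgaussian M (\<lambda>x. of_bool (P x) * Y x) b"
proof -
  define p where "p = expectation (\<lambda>x. of_bool (P x) :: real)"
  have [measurable]: "random_variable borel (\<lambda>x. of_bool (P x) :: real)"
    using indep by (rule indep_var_rv1)
  have intP: "integrable M (\<lambda>x. of_bool (P x) :: real)"
    by (rule integrable_const_bound[where B = 1]) auto
  have p: "0 \<le> p" "p \<le> 1"
    unfolding p_def using intP by (auto intro!: integral_nonneg integral_le_const)
  have intY: "integrable M Y" "expectation Y = 0"
    using Y unfolding subgaussian_def by blast+
  have b: "1 \<le> exp (s\<^sup>2 * b / 2)" for s :: real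
    using subgaussian_nonneg[OF Y] by simp
  have mgf: "integrable M (\<lambda>x. exp (s * (of_bool (P x) * Y x)))
      \<and> expectation (\<lambda>x. exp (s * (of_bool (P x) * Y x))) \<le> exp (s\<^sup>2 * b / 2)" for s
  proof -
    have expY: "integrable M (\<lambda>x. exp (s * Y x))" "expectation (\<lambda>x. exp (s * Y x)) \<le> exp (s\<^sup>2 * b / 2)"
      using Y unfolding subgaussian_def by blast+
    have indep_exp: "indep_var borel (\<lambda>x. of_bool (P x)) borel (\<lambda>x. exp (s * Y x))"
      using indep_var_compose[OF indep, of "\<lambda>x. x" borel "\<lambda>y. exp (s * y)" borel]
      by (simp add: comp_def)
    have split: "exp (s * (of_bool (P x) * Y x)) = (1 - of_bool (P x)) + of_bool (P x) * exp (s * Y x)" for x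
      by simp
    have int1: "integrable M (\<lambda>x. of_bool (P x) * exp (s * Y x))"
      by (rule indep_var_integrable[OF indep_exp intP expY(1)])
    have "expectation (\<lambda>x. (1 - of_bool (P x)) + of_bool (P x) * exp (s * Y x))
        = (1 - p) + p * expectation (\<lambda>x. exp (s * Y x))"
      using intP int1 indep_var_lebesgue_integral[OF indep_exp intP expY(1)]
      by (simp add: p_def prob_space)
    also have "\<dots> \<le> (1 - p) * exp (s\<^sup>2 * b / 2) + p * exp (s\<^sup>2 * b / 2)"
      using mult_left_mono[OF b[of s], of "1 - p"] mult_left_mono[OF expY(2), of p] p by simp
    finally show ?thesis
      unfolding split using intP int1 by (simp add: algebra_simps)
  qed
  have "expectation (\<lambda>x. of_bool (P x) * Y x) = 0"
    using indep_var_lebesgue_integral[OF indep intP intY(1)] intY(2) by simp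
  with mgf indep_var_integrable[OF indep intP intY(1)] show ?thesis
    unfolding subgaussian_def by blast
qed

lemma indep_subgaussian_sum_ge:
  fixes X :: "'i \<Rightarrow> 'a \<Rightarrow> real"
  assumes fin: "finite I" and indep: "indep_vars (\<lambda>_. borel) X I"
    and subg: "\<And>i. i \<in> I \<Longrightarrow> subgaussian M (X i) \<sigma>"
    and \<sigma>: "0 < \<sigma>" and d: "0 \<le> d"
  shows "prob {x \<in> space M. real (card I) * d \<le> (\<Sum>i\<in>I. X i x)}
    \<le> exp (- (real (card I) * d\<^sup>2 / (2 * \<sigma>)))"
proof (cases "d = 0")
  case False
  with d have d: "0 < d" by simp
  define l where "l = d / \<sigma>"
  have l: "0 < l"
    using d \<sigma> by (simp add: l_def)
  have [measurable]: "\<And>i. i \<in> I \<Longrightarrow> random_variable borel (X i)"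
    using indep unfolding indep_vars_def by auto
  have "ennreal (prob {x \<in> space M. real (card I) * d \<le> (\<Sum>i\<in>I. X i x)})
      = emeasure M {x \<in> space M. real (card I) * d \<le> (\<Sum>i\<in>I. X i x)}"
    by (simp add: emeasure_eq_measure)
  also have "\<dots> \<le> ennreal (exp (- l * (real (card I) * d))) * (\<integral>\<^sup>+x\<in>space M. exp (l * (\<Sum>i\<in>I. X i x)) \<partial>M)"
    by (intro Chernoff_ineq_nn_integral_ge l) auto
  also have "(\<integral>\<^sup>+x\<in>space M. exp (l * (\<Sum>i\<in>I. X i x)) \<partial>M) = (\<integral>\<^sup>+x. (\<Prod>i\<in>I. ennreal (exp (l * X i x))) \<partial>M)"
    by (intro nn_integral_cong) (simp_all add: sum_distrib_left exp_sum fin prod_ennreal)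
  also have "\<dots> = (\<Prod>i\<in>I. \<integral>\<^sup>+x. ennreal (exp (l * X i x)) \<partial>M)"
    by (intro indep_vars_nn_integral fin indep_vars_compose2[OF indep]) auto
  also have "ennreal (exp (- l * (real (card I) * d))) * \<dots>
      \<le> ennreal (exp (- l * (real (card I) * d))) * (\<Prod>i\<in>I. ennreal (exp (l\<^sup>2 * \<sigma> / 2)))"
    by (intro mult_left_mono prod_mono_ennreal subgaussian_nn_integral_mgf subg) auto
  also have "\<dots> = ennreal (exp (- l * (real (card I) * d)) * exp (l\<^sup>2 * \<sigma> / 2) ^ card I)"
    by (simp add: ennreal_mult ennreal_power)
  also have "exp (- l * (real (card I) * d)) * exp (l\<^sup>2 * \<sigma> / 2) ^ card I
      = exp (real (card I) * (l\<^sup>2 * \<sigma> / 2 - l * d))"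
    by (simp add: exp_of_nat_mult[symmetric] exp_add[symmetric] algebra_simps)
  also have "real (card I) * (l\<^sup>2 * \<sigma> / 2 - l * d) = - (real (card I) * d\<^sup>2 / (2 * \<sigma>))"
    using \<sigma> by (simp add: l_def field_simps power2_eq_square)
  finally show ?thesis
    by (subst (asm) ennreal_le_iff) simp_all
qed simp

lemma indep_subgaussian_sum_abs_ge:
  fixes X :: "'i \<Rightarrow> 'a \<Rightarrow> real"
  assumes fin: "finite I" and indep: "indep_vars (\<lambda>_. borel) X I"
    and subg: "\<And>i. i \<in> I \<Longrightarrow> subgaussian M (X i) \<sigma>"
    and \<sigma>: "0 < \<sigma>" and d: "0 \<le> d"
  shows "prob {x \<in> space M. real (card I) * d \<le> \<bar>\<Sum>i\<in>I. X i x\<bar>}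
    \<le> 2 * exp (- (real (card I) * d\<^sup>2 / (2 * \<sigma>)))"
proof -
  have [measurable]: "\<And>i. i \<in> I \<Longrightarrow> random_variable borel (X i)"
    using indep unfolding indep_vars_def by auto
  have "prob {x \<in> space M. real (card I) * d \<le> \<bar>\<Sum>i\<in>I. X i x\<bar>}
      \<le> prob ({x \<in> space M. real (card I) * d \<le> (\<Sum>i\<in>I. X i x)}
          \<union> {x \<in> space M. real (card I) * d \<le> (\<Sum>i\<in>I. - X i x)})"
    by (intro finite_measure_mono) (auto simp: sum_negf abs_le_iff)
  also have "\<dots> \<le> prob {x \<in> space M. real (card I) * d \<le> (\<Sum>i\<in>I. X i x)}
      + prob {x \<in> space M. real (card I) * d \<le> (\<Sum>i\<in>I. - X i x)}"
    by (intro measure_Un_le) auto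
  also have "\<dots> \<le> 2 * exp (- (real (card I) * d\<^sup>2 / (2 * \<sigma>)))"
    using indep_subgaussian_sum_ge[OF fin indep subg \<sigma> d]
      indep_subgaussian_sum_ge[OF fin indep_vars_compose2[OF indep] subgaussian_uminus[OF subg] \<sigma> d]
    by simp
  finally show ?thesis .
qed

end

lemma real_steps_upto: "real (steps_upto j) = real j * (real j + 1) / 2"
proof -
  have "2 * steps_upto j = j * (j + 1)"
    unfolding steps_upto_def by simp
  then show ?thesis
    by (metis of_nat_mult of_nat_add of_nat_1 of_nat_numeral nonzero_mult_div_cancel_left zero_neq_numeral)
qed

lemma exp_steps_upto_bigo:
  fixes \<kappa> :: real
  assumes "0 < \<kappa>"
  shows "(\<lambda>j. exp (- (real (steps_upto j) * \<kappa>))) \<in> O(\<lambda>j. exp (- (real j powr 1.4)))"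
  unfolding real_steps_upto using assms by real_asymp

lemma eventually_steps_upto_large:
  fixes \<epsilon> :: real
  assumes "0 < \<epsilon>"
  shows "eventually (\<lambda>j. 0 < steps_upto j \<and> exp (- (real (steps_upto j) / 8)) < \<epsilon>) sequentially"
proof -
  have "eventually (\<lambda>j. 0 < real (steps_upto j)) sequentially"
    unfolding real_steps_upto by real_asymp
  moreover have "(\<lambda>j. exp (- (real (steps_upto j) / 8))) \<longlonglongrightarrow> 0"
    unfolding real_steps_upto by real_asymp
  then have "eventually (\<lambda>j. exp (- (real (steps_upto j) / 8)) < \<epsilon>) sequentially"
    using order_tendstoD(2) assms by blast
  ultimately show ?thesis
    by eventually_elim simp
qed

lemma abs_relative_error_le:
  fixes c p S T x \<epsilon> :: real
  assumes c: "0 < c" and T: "0 < T" and \<epsilon>: "\<epsilon> \<le> 1"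
    and p: "1 - \<epsilon> / 4 \<le> p" "p \<le> 1"
    and S: "T / 4 < S" and x: "\<bar>x\<bar> < T * (\<epsilon> * c / 16)"
  shows "\<bar>c + x / S - c * p\<bar> \<le> \<epsilon> * (c * p)"
proof -
  have "\<bar>x / S\<bar> = \<bar>x\<bar> / S"
    using S T by simp
  also have "\<dots> \<le> \<bar>x\<bar> / (T / 4)"
    using S T by (intro divide_left_mono) auto
  also have "\<dots> \<le> \<epsilon> * c / 4"
    using x T by (simp add: field_simps)
  finally have quotient: "\<bar>x / S\<bar> \<le> \<epsilon> * c / 4" .
  have "c - c * p \<le> \<epsilon> * c / 4"
    using mult_left_mono[of "1 - p" "\<epsilon> / 4" c] c p by (simp add: algebra_simps)
  moreover have "\<epsilon> * c / 2 \<le> \<epsilon> * (c * p)"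
    using mult_left_mono[of "1 / 2" p "\<epsilon> * c"] c p \<epsilon> by (simp add: algebra_simps)
  moreover have "\<bar>c + x / S - c * p\<bar> \<le> \<bar>x / S\<bar> + (c - c * p)"
    using c p abs_triangle_ineq[of "x / S" "c - c * p"] by (simp add: algebra_simps)
  ultimately show ?thesis
    using quotient by linarith
qed

section \<open>Block M + 1 of the estimation phase\<close>

definition model_vars :: "(nat \<Rightarrow> nat \<Rightarrow> 'a \<Rightarrow> bool) \<Rightarrow> (nat \<Rightarrow> nat \<Rightarrow> 'a \<Rightarrow> real)
    \<Rightarrow> (nat \<times> nat) + (nat \<times> nat) \<Rightarrow> 'a \<Rightarrow> real" where
  "model_vars A \<nu> = (\<lambda>i \<omega>. case i of Inl (t, k) \<Rightarrow> of_bool (A t k \<omega>) | Inr (t, k) \<Rightarrow> \<nu> t k \<omega>)"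

locale ene_block = prob_space M for M :: "'a measure" +
  fixes N n :: nat and U b :: real
    and A :: "nat \<Rightarrow> nat \<Rightarrow> 'a \<Rightarrow> bool" and \<nu> :: "nat \<Rightarrow> nat \<Rightarrow> 'a \<Rightarrow> real"
  assumes agent: "n < N" and U_pos: "0 < U"
    and indep: "indep_vars (\<lambda>_. borel) (model_vars A \<nu>)
        {i. case i of Inl (t, k) \<Rightarrow> k < N | Inr (t, k) \<Rightarrow> k < N}"
    and prob_access: "\<And>t k. k < N \<Longrightarrow> prob {\<omega> \<in> space M. A t k \<omega>} = 1 / 2"
    and subgaussian_noise: "\<And>t k. k < N \<Longrightarrow> subgaussian M (\<nu> t k) b"
begin

lemma random_variable_model_vars:
  "(case i of Inl (t, k) \<Rightarrow> k < N | Inr (t, k) \<Rightarrow> k < N) \<Longrightarrow> random_variable borel (model_vars A \<nu> i)"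
  using indep unfolding indep_vars_def by auto

lemma measurable_access [measurable]: "k < N \<Longrightarrow> Measurable.pred M (A t k)"
proof -
  assume "k < N"
  then have "random_variable borel (\<lambda>\<omega>. of_bool (A t k \<omega>) :: real)"
    using random_variable_model_vars[of "Inl (t, k)"] by (simp add: model_vars_def)
  from measurable_sets[OF this, of "{1}"]
  have "{\<omega> \<in> space M. A t k \<omega>} \<in> sets M"
    by (simp add: vimage_def Int_def conj_commute)
  then show ?thesis
    unfolding pred_def .
qed

lemma measurable_noise [measurable]: "k < N \<Longrightarrow> random_variable borel (\<nu> t k)"
  using random_variable_model_vars[of "Inr (t, k)"] by (simp add: model_vars_def)

definition active :: "nat \<Rightarrow> 'a \<Rightarrow> nat set" where
  "active t \<omega> = {k. k < N \<and> A t k \<omega>}"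

lemma sets_active_eq [measurable]: "{\<omega> \<in> space M. active t \<omega> = S} \<in> sets M"
proof -
  have "{\<omega> \<in> space M. active t \<omega> = S}
      = {\<omega> \<in> space M. (\<forall>k\<in>{..<N}. A t k \<omega> = (k \<in> S)) \<and> S \<subseteq> {..<N}}"
    by (auto simp: active_def)
  also have "\<dots> \<in> sets M"
    by measurable
  finally show ?thesis .
qed

lemma prob_active_eq:
  assumes S: "S \<subseteq> {..<N}"
  shows "prob {\<omega> \<in> space M. active t \<omega> = S} = (1 / 2) ^ N"
proof -
  define B :: "(nat \<times> nat) + (nat \<times> nat) \<Rightarrow> real set"
    where "B i = (case i of Inl (_, k) \<Rightarrow> {of_bool (k \<in> S)} | Inr _ \<Rightarrow> {})" for i
  define event where "event k = model_vars A \<nu> (Inl (t, k)) -` B (Inl (t, k)) \<inter> space M" for k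
  have "prob (\<Inter>k<N. event k)
      = prob (\<Inter>i\<in>(\<lambda>k. Inl (t, k)) ` {..<N}. model_vars A \<nu> i -` B i \<inter> space M)"
    by (simp add: event_def)
  also have "\<dots> = (\<Prod>i\<in>(\<lambda>k. Inl (t, k)) ` {..<N}. prob (model_vars A \<nu> i -` B i \<inter> space M))"
    using agent by (intro indep_varsD[OF indep]) (auto simp: B_def)
  also have "\<dots> = (\<Prod>k<N. prob (event k))"
    by (simp add: event_def prod.reindex inj_on_def)
  also have "\<dots> = (\<Prod>k<N. 1 / 2)"
  proof (rule prod.cong)
    fix k assume "k \<in> {..<N}"
    then have "prob {\<omega> \<in> space M. A t k \<omega>} = 1 / 2"
      by (simp add: prob_access)
    moreover have "prob {\<omega> \<in> space M. \<not> A t k \<omega>} = 1 - prob {\<omega> \<in> space M. A t k \<omega>}"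
      using \<open>k \<in> {..<N}\<close> by (subst prob_compl[symmetric]) (auto intro!: arg_cong[where f = prob])
    moreover have "event k = {\<omega> \<in> space M. A t k \<omega> = (k \<in> S)}"
      by (auto simp: event_def model_vars_def B_def)
    ultimately show "prob (event k) = 1 / 2"
      by (cases "k \<in> S") simp_all
  qed simp
  also have "(\<Inter>k<N. event k) = {\<omega> \<in> space M. active t \<omega> = S}"
    using S agent by (auto simp: event_def model_vars_def B_def active_def of_bool_eq_iff subset_eq)
  finally show ?thesis
    by simp
qed

lemma fun_active_eq_sum_indicator:
  fixes G :: "nat set \<Rightarrow> real"
  assumes "\<omega> \<in> space M"
  shows "G (active t \<omega>) = (\<Sum>S\<in>Pow {..<N}. G S * indicator {\<omega> \<in> space M. active t \<omega> = S} \<omega>)"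
proof -
  have "(\<Sum>S\<in>Pow {..<N}. G S * indicator {\<omega> \<in> space M. active t \<omega> = S} \<omega>)
      = (\<Sum>S\<in>Pow {..<N}. if S = active t \<omega> then G S else 0)"
    using assms by (intro sum.cong) (auto simp: indicator_def)
  also have "\<dots> = G (active t \<omega>)"
    by (auto simp: active_def)
  finally show ?thesis ..
qed

lemma measurable_fun_active [measurable]:
  "(\<lambda>\<omega>. G (active t \<omega>) :: real) \<in> borel_measurable M"
proof (rule measurable_cong[THEN iffD1, rotated])
  show "(\<lambda>\<omega>. \<Sum>S\<in>Pow {..<N}. G S * indicator {\<omega> \<in> space M. active t \<omega> = S} \<omega>) \<in> borel_measurable M"
    by measurable
qed (simp add: fun_active_eq_sum_indicator)

lemma expectation_fun_active:
  "expectation (\<lambda>\<omega>. G (active t \<omega>)) = (1 / 2) ^ N * (\<Sum>S\<in>Pow {..<N}. G S :: real)"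
proof -
  have "expectation (\<lambda>\<omega>. G (active t \<omega>))
      = expectation (\<lambda>\<omega>. \<Sum>S\<in>Pow {..<N}. G S * indicator {\<omega> \<in> space M. active t \<omega> = S} \<omega>)"
    by (intro Bochner_Integration.integral_cong) (simp_all add: fun_active_eq_sum_indicator)
  also have "\<dots> = (\<Sum>S\<in>Pow {..<N}. G S * prob {\<omega> \<in> space M. active t \<omega> = S})"
    by (subst Bochner_Integration.integral_sum)
      (auto simp: emeasure_eq_measure)
  also have "\<dots> = (\<Sum>S\<in>Pow {..<N}. G S * (1 / 2) ^ N)"
    by (intro sum.cong) (auto simp: prob_active_eq)
  finally show ?thesis
    by (simp add: sum_distrib_right mult.commute)
qed

definition acc :: "nat \<Rightarrow> 'a \<Rightarrow> real" where
  "acc t \<omega> = of_bool (A t n \<omega>)"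

definition share :: "nat \<Rightarrow> 'a \<Rightarrow> real" where
  "share t \<omega> = acc t \<omega> * U / real (load N A t \<omega>)"

definition acc_noise :: "nat \<Rightarrow> 'a \<Rightarrow> real" where
  "acc_noise t \<omega> = acc t \<omega> * \<nu> t n \<omega>"

text \<open>The mean utility of agent n at a step in which it accesses resource 1 (share t has mean mu / 2).\<close>
definition mu :: real where
  "mu = 2 * (1 / 2) ^ N * (\<Sum>S\<in>Pow {..<N}. of_bool (n \<in> S) * U / real (card S))"

definition centered_share :: "nat \<Rightarrow> 'a \<Rightarrow> real" where
  "centered_share t \<omega> = share t \<omega> - mu * acc t \<omega>"

lemma share_eq_fun_active: "share t \<omega> = of_bool (n \<in> active t \<omega>) * U / real (card (active t \<omega>))"
  using agent by (simp add: share_def acc_def load_def active_def)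

lemma measurable_acc [measurable]: "random_variable borel (acc t)"
  unfolding acc_def using agent by measurable

lemma measurable_share [measurable]: "random_variable borel (share t)"
  unfolding share_eq_fun_active by measurable

lemma measurable_acc_noise [measurable]: "random_variable borel (acc_noise t)"
  unfolding acc_noise_def using agent by measurable

lemma measurable_centered_share [measurable]: "random_variable borel (centered_share t)"
  unfolding centered_share_def by measurable

lemma acc_cases: "acc t \<omega> = 0 \<or> acc t \<omega> = 1"
  by (simp add: acc_def)

lemma integrable_acc [intro]: "integrable M (acc t)"
  by (rule integrable_const_bound[where B = 1]) (auto simp: acc_def)

lemma expectation_acc: "expectation (acc t) = 1 / 2"
proof -
  have "expectation (acc t) = expectation (indicator {\<omega> \<in> space M. A t n \<omega>})"
    by (intro Bochner_Integration.integral_cong) (auto simp: acc_def indicator_def)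
  also have "\<dots> = 1 / 2"
    using prob_access[OF agent] by (simp add: Int_absorb2 subsetI)
  finally show ?thesis .
qed

lemma expectation_share: "expectation (share t) = mu / 2"
  using expectation_fun_active[of "\<lambda>S. of_bool (n \<in> S) * U / real (card S)" t]
  unfolding share_eq_fun_active mu_def by simp

lemma mu_pos: "0 < mu"
proof -
  have "(\<Sum>S\<in>{{n}}. of_bool (n \<in> S) * U / real (card S))
      \<le> (\<Sum>S\<in>Pow {..<N}. of_bool (n \<in> S) * U / real (card S))"
    using agent U_pos by (intro sum_mono2) auto
  then show ?thesis
    using U_pos by (simp add: mu_def)
qed

lemma share_bounds: "share t \<omega> \<in> {0..U}"
proof (cases "A t n \<omega>")
  case True
  then have "1 \<le> load N A t \<omega>"
    using agent by (auto simp: load_def card_gt_0_iff Suc_le_eq)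
  then show ?thesis
    using True U_pos by (simp add: share_def acc_def field_simps)
qed (use U_pos in \<open>simp add: share_def acc_def\<close>)

lemma centered_share_bounds: "centered_share t \<omega> \<in> {- mu..U}"
  using share_bounds[of t \<omega>] acc_cases[of t \<omega>] mu_pos U_pos
  by (auto simp: centered_share_def)

lemma expectation_centered_share: "expectation (centered_share t) = 0"
proof -
  have "integrable M (share t)"
    by (rule integrable_const_bound[where B = U]) (use share_bounds U_pos in \<open>auto simp: abs_le_iff\<close>)
  then show ?thesis
    unfolding centered_share_def
    by (simp add: Bochner_Integration.integral_diff[OF _ integrable_mult_right[OF integrable_acc]]
        expectation_share expectation_acc)
qed

definition step_index :: "nat \<Rightarrow> ((nat \<times> nat) + (nat \<times> nat)) set" where
  "step_index t = (\<lambda>k. Inl (t, k)) ` {..<N} \<union> {Inr (t, n)}"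

abbreviation step_space :: "nat \<Rightarrow> ((nat \<times> nat) + (nat \<times> nat) \<Rightarrow> real) measure" where
  "step_space t \<equiv> PiM (step_index t) (\<lambda>_. borel)"

definition step_obs :: "nat \<Rightarrow> 'a \<Rightarrow> (nat \<times> nat) + (nat \<times> nat) \<Rightarrow> real" where
  "step_obs t \<omega> = restrict (\<lambda>i. model_vars A \<nu> i \<omega>) (step_index t)"

definition determined_by_step :: "nat \<Rightarrow> ('a \<Rightarrow> real) \<Rightarrow> bool" where
  "determined_by_step t X \<longleftrightarrow> (\<exists>G \<in> borel_measurable (step_space t). X = (\<lambda>\<omega>. G (step_obs t \<omega>)))"

lemma measurable_step_access [measurable]:
  "k < N \<Longrightarrow> (\<lambda>x. x (Inl (t, k))) \<in> borel_measurable (step_space t)"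
  by (intro measurable_component_singleton) (auto simp: step_index_def)

lemma measurable_step_noise [measurable]:
  "(\<lambda>x. x (Inr (t, n))) \<in> borel_measurable (step_space t)"
  by (intro measurable_component_singleton) (auto simp: step_index_def)

lemma step_obs_access: "k < N \<Longrightarrow> step_obs t \<omega> (Inl (t, k)) = of_bool (A t k \<omega>)"
  by (simp add: step_obs_def step_index_def model_vars_def)

lemma step_obs_noise: "step_obs t \<omega> (Inr (t, n)) = \<nu> t n \<omega>"
  by (simp add: step_obs_def step_index_def model_vars_def)

lemma determined_by_step_acc: "determined_by_step t (acc t)"
  unfolding determined_by_step_def
  by (rule bexI[of _ "\<lambda>x. x (Inl (t, n))"]) (use agent in \<open>auto simp: acc_def step_obs_access\<close>)

lemma determined_by_step_centered_share: "determined_by_step t (centered_share t)"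
proof -
  define G where "G x = x (Inl (t, n)) * U / (\<Sum>k<N. x (Inl (t, k))) - mu * x (Inl (t, n))"
    for x :: "(nat \<times> nat) + (nat \<times> nat) \<Rightarrow> real"
  have "real (load N A t \<omega>) = (\<Sum>k<N. step_obs t \<omega> (Inl (t, k)))" for \<omega>
    by (simp add: step_obs_access load_def sum.If_cases Int_def conj_commute)
  then have "centered_share t \<omega> = G (step_obs t \<omega>)" for \<omega>
    using agent by (simp add: G_def centered_share_def share_def acc_def step_obs_access)
  moreover have "G \<in> borel_measurable (step_space t)"
    unfolding G_def using agent by measurable
  ultimately show ?thesis
    unfolding determined_by_step_def by auto
qed

lemma determined_by_step_acc_noise: "determined_by_step t (acc_noise t)"
  unfolding determined_by_step_def
  by (rule bexI[of _ "\<lambda>x. x (Inl (t, n)) * x (Inr (t, n))"])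
    (use agent in \<open>auto simp: acc_noise_def acc_def step_obs_access step_obs_noise\<close>)

lemma determined_by_step_add:
  assumes "determined_by_step t X" and "determined_by_step t Y"
  shows "determined_by_step t (\<lambda>\<omega>. X \<omega> + Y \<omega>)"
proof -
  obtain G H where "G \<in> borel_measurable (step_space t)" "H \<in> borel_measurable (step_space t)"
    and "X = (\<lambda>\<omega>. G (step_obs t \<omega>))" "Y = (\<lambda>\<omega>. H (step_obs t \<omega>))"
    using assms unfolding determined_by_step_def by blast
  then show ?thesis
    unfolding determined_by_step_def by (intro bexI[of _ "\<lambda>x. G x + H x"]) auto
qed

lemma indep_step_obs: "indep_vars step_space step_obs UNIV"
  unfolding step_obs_def using agent
  by (intro indep_vars_restrict[OF indep]) (auto simp: step_index_def disjoint_family_on_def)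

lemma indep_vars_determined_by_step:
  assumes "\<And>t. t \<in> I \<Longrightarrow> determined_by_step t (X t)"
  shows "indep_vars (\<lambda>_. borel) X I"
proof -
  obtain G where G: "\<And>t. t \<in> I \<Longrightarrow> G t \<in> borel_measurable (step_space t) \<and> X t = (\<lambda>\<omega>. G t (step_obs t \<omega>))"
    using assms unfolding determined_by_step_def by metis
  have "indep_vars (\<lambda>_. borel) (\<lambda>t \<omega>. G t (step_obs t \<omega>)) I"
    using G by (intro indep_vars_compose2[OF indep_vars_subset[OF indep_step_obs]]) auto
  with G show ?thesis
    by (subst indep_vars_cong[where Y = "\<lambda>t \<omega>. G t (step_obs t \<omega>)"]) auto
qed

definition accesses :: "nat \<Rightarrow> 'a \<Rightarrow> real" where
  "accesses T \<omega> = (\<Sum>t<T. acc t \<omega>)"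

definition other_accesses :: "nat \<Rightarrow> nat \<Rightarrow> 'a \<Rightarrow> real" where
  "other_accesses T t \<omega> = (\<Sum>s\<in>{..<T} - {t}. acc s \<omega>)"

lemma measurable_accesses [measurable]: "random_variable borel (accesses T)"
  unfolding accesses_def by measurable

lemma measurable_other_accesses [measurable]: "random_variable borel (other_accesses T t)"
  unfolding other_accesses_def by measurable

lemma other_accesses_nonneg: "0 \<le> other_accesses T t \<omega>"
  unfolding other_accesses_def by (intro sum_nonneg) (simp add: acc_def)

lemma indep_var_other_accesses:
  assumes "determined_by_step t X" and "t < T"
  shows "indep_var borel X borel (other_accesses T t)"
proof -
  define Y where "Y s = (if s = t then X else acc s)" for s
  have "indep_vars (\<lambda>_. borel) Y (insert t ({..<T} - {t}))"
    using assms(1) by (intro indep_vars_determined_by_step) (auto simp: Y_def determined_by_step_acc)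
  then have "indep_var borel (Y t) borel (\<lambda>\<omega>. \<Sum>s\<in>{..<T} - {t}. Y s \<omega>)"
    by (intro indep_vars_sum) auto
  then show ?thesis
    by (simp add: Y_def other_accesses_def[abs_def])
qed

lemma indep_var_access_noise: "indep_var borel (\<lambda>\<omega>. of_bool (A t n \<omega>)) borel (\<nu> t n)"
proof -
  have "indep_var (PiM {Inl (t, n)} (\<lambda>_. borel)) (\<lambda>\<omega>. restrict (\<lambda>i. model_vars A \<nu> i \<omega>) {Inl (t, n)})
      (PiM {Inr (t, n)} (\<lambda>_. borel)) (\<lambda>\<omega>. restrict (\<lambda>i. model_vars A \<nu> i \<omega>) {Inr (t, n)})"
    using agent by (intro indep_var_restrict[OF indep]) auto
  then have "indep_var borel ((\<lambda>x. x (Inl (t, n))) \<circ> (\<lambda>\<omega>. restrict (\<lambda>i. model_vars A \<nu> i \<omega>) {Inl (t, n)}))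
      borel ((\<lambda>x. x (Inr (t, n))) \<circ> (\<lambda>\<omega>. restrict (\<lambda>i. model_vars A \<nu> i \<omega>) {Inr (t, n)}))"
    by (rule indep_var_compose) (auto intro!: measurable_component_singleton)
  then show ?thesis
    by (simp add: comp_def model_vars_def)
qed

lemma subgaussian_acc_noise: "subgaussian M (acc_noise t) b"
  unfolding acc_noise_def[abs_def] acc_def
  by (rule subgaussian_indep_indicator_mult[OF indep_var_access_noise subgaussian_noise[OF agent]])

lemma subgaussian_centered_share: "subgaussian M (centered_share t) ((U + mu)\<^sup>2 / 4)"
  using subgaussian_bounded_centered[OF measurable_centered_share centered_share_bounds]
  by (simp add: expectation_centered_share)

lemma prob_accesses_le: "prob {\<omega> \<in> space M. accesses T \<omega> \<le> real T / 4} \<le> exp (- (real T / 8))"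
proof -
  have "subgaussian M (\<lambda>\<omega>. - acc t \<omega> - expectation (\<lambda>\<omega>. - acc t \<omega>)) ((0 - (- 1))\<^sup>2 / 4)" for t
    by (rule subgaussian_bounded_centered) (measurable, simp add: acc_def)
  then have subg: "subgaussian M (\<lambda>\<omega>. 1 / 2 - acc t \<omega>) (1 / 4)" for t
    by (simp add: expectation_acc)
  have indep_acc: "indep_vars (\<lambda>_. borel) (\<lambda>t \<omega>. 1 / 2 - acc t \<omega>) {..<T}"
    by (intro indep_vars_compose2[OF indep_vars_determined_by_step, of _ acc] determined_by_step_acc) auto
  have "{\<omega> \<in> space M. accesses T \<omega> \<le> real T / 4}
      = {\<omega> \<in> space M. real (card {..<T}) * (1 / 4) \<le> (\<Sum>t\<in>{..<T}. 1 / 2 - acc t \<omega>)}"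
    by (auto simp: accesses_def sum_subtractf)
  also have "prob \<dots> \<le> exp (- (real (card {..<T}) * (1 / 4)\<^sup>2 / (2 * (1 / 4))))"
    by (rule indep_subgaussian_sum_ge[OF _ indep_acc subg]) auto
  finally show ?thesis
    by (simp add: power2_eq_square)
qed

lemma prob_sum_centered_share_ge:
  assumes "0 \<le> d"
  shows "prob {\<omega> \<in> space M. real T * d \<le> \<bar>\<Sum>t<T. centered_share t \<omega>\<bar>}
    \<le> 2 * exp (- (real T * d\<^sup>2 / (2 * ((U + mu)\<^sup>2 / 4))))"
  using indep_subgaussian_sum_abs_ge[OF _ indep_vars_determined_by_step subgaussian_centered_share _ assms,
      of "{..<T}"] determined_by_step_centered_share U_pos mu_pos
  by simp

lemma prob_sum_acc_noise_ge:
  assumes "0 \<le> d"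
  shows "prob {\<omega> \<in> space M. real T * d \<le> \<bar>\<Sum>t<T. acc_noise t \<omega>\<bar>}
    \<le> 2 * exp (- (real T * d\<^sup>2 / (2 * (b + 1))))"
proof -
  have "0 \<le> b"
    using subgaussian_nonneg[OF subgaussian_acc_noise] .
  then have subg: "subgaussian M (acc_noise t) (b + 1)" for t
    by (intro subgaussian_mono[OF subgaussian_acc_noise]) simp
  show ?thesis
    using indep_subgaussian_sum_abs_ge[OF _ indep_vars_determined_by_step subg _ assms, where I = "{..<T}"]
      determined_by_step_acc_noise \<open>0 \<le> b\<close>
    by simp
qed

text \<open>If agent n never accessed, both sides are 0 because x / 0 = 0.\<close>

lemma rbar_eq:
  "rbar N n U A \<nu> j \<omega> = mu * of_bool (accesses (steps_upto j) \<omega> \<noteq> 0)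
    + ((\<Sum>t<steps_upto j. centered_share t \<omega>) + (\<Sum>t<steps_upto j. acc_noise t \<omega>))
      / accesses (steps_upto j) \<omega>"
proof -
  define T where "T = steps_upto j"
  have S: "{t. t < T \<and> A t n \<omega>} = {t \<in> {..<T}. A t n \<omega>}"
    by auto
  have "(\<Sum>t | t < T \<and> A t n \<omega>. U / real (load N A t \<omega>) + \<nu> t n \<omega>)
      = (\<Sum>t<T. share t \<omega> + acc_noise t \<omega>)"
    unfolding S sum.inter_filter[OF finite_lessThan]
    by (intro sum.cong) (auto simp: share_def acc_noise_def acc_def)
  also have "\<dots> = (\<Sum>t<T. centered_share t \<omega>) + mu * accesses T \<omega> + (\<Sum>t<T. acc_noise t \<omega>)"
    by (simp add: centered_share_def accesses_def sum.distrib sum_subtractf sum_distrib_left)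
  finally have sum: "(\<Sum>t | t < T \<and> A t n \<omega>. U / real (load N A t \<omega>) + \<nu> t n \<omega>)
      = (\<Sum>t<T. centered_share t \<omega>) + mu * accesses T \<omega> + (\<Sum>t<T. acc_noise t \<omega>)" .
  have card: "real (card {t. t < T \<and> A t n \<omega>}) = accesses T \<omega>"
    unfolding S accesses_def acc_def by (simp add: sum.If_cases Int_def)
  show ?thesis
    unfolding rbar_def Let_def T_def[symmetric] sum card
    by (cases "accesses T \<omega> = 0") (auto simp: field_simps)
qed

text \<open>The numerator vanishes unless agent n accesses at step t, and then 1 + other_accesses T t =
  accesses T; unlike accesses T, the new denominator is independent of the numerator.\<close>

lemma sum_div_other_accesses:
  "(\<Sum>t<T. (centered_share t \<omega> + acc_noise t \<omega>) / (1 + other_accesses T t \<omega>))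
    = ((\<Sum>t<T. centered_share t \<omega>) + (\<Sum>t<T. acc_noise t \<omega>)) / accesses T \<omega>"
proof -
  have "(centered_share t \<omega> + acc_noise t \<omega>) / (1 + other_accesses T t \<omega>)
      = (centered_share t \<omega> + acc_noise t \<omega>) / accesses T \<omega>" if "t < T" for t
  proof (cases "A t n \<omega>")
    case True
    have "accesses T \<omega> = acc t \<omega> + other_accesses T t \<omega>"
      unfolding accesses_def other_accesses_def using that by (simp add: sum.remove)
    with True show ?thesis
      by (simp add: acc_def)
  qed (simp add: centered_share_def share_def acc_noise_def acc_def)
  then have "(\<Sum>t<T. (centered_share t \<omega> + acc_noise t \<omega>) / (1 + other_accesses T t \<omega>))
      = (\<Sum>t<T. (centered_share t \<omega> + acc_noise t \<omega>) / accesses T \<omega>)"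
    by (intro sum.cong) auto
  then show ?thesis
    by (simp add: sum_divide_distrib[symmetric] sum.distrib)
qed

lemma
  assumes "t < T"
  shows integrable_deviation_div_other_accesses:
      "integrable M (\<lambda>\<omega>. (centered_share t \<omega> + acc_noise t \<omega>) / (1 + other_accesses T t \<omega>))"
    and expectation_deviation_div_other_accesses:
      "expectation (\<lambda>\<omega>. (centered_share t \<omega> + acc_noise t \<omega>) / (1 + other_accesses T t \<omega>)) = 0"
proof -
  let ?D = "\<lambda>\<omega>. centered_share t \<omega> + acc_noise t \<omega>"
  let ?H = "\<lambda>\<omega>. 1 / (1 + other_accesses T t \<omega>)"
  have "indep_var borel ((\<lambda>x. x) \<circ> ?D) borel ((\<lambda>r. 1 / (1 + r)) \<circ> other_accesses T t)"
    using determined_by_step_add[OF determined_by_step_centered_share determined_by_step_acc_noise] assms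
    by (intro indep_var_compose[OF indep_var_other_accesses]) auto
  then have indep: "indep_var borel ?D borel ?H"
    by (simp add: comp_def)
  have intD: "integrable M ?D" "expectation ?D = 0"
    using subgaussian_centered_share[of t] subgaussian_acc_noise[of t]
    unfolding subgaussian_def by auto
  have intH: "integrable M ?H"
  proof (rule integrable_const_bound[where B = 1])
    have "norm (1 / (1 + other_accesses T t \<omega>)) \<le> 1" for \<omega>
      using other_accesses_nonneg[of T t \<omega>] by (simp add: divide_le_eq_1)
    then show "AE \<omega> in M. norm (1 / (1 + other_accesses T t \<omega>)) \<le> 1"
      by simp
  qed simp
  show "integrable M (\<lambda>\<omega>. ?D \<omega> / (1 + other_accesses T t \<omega>))"
    using indep_var_integrable[OF indep intD(1) intH] by simp
  show "expectation (\<lambda>\<omega>. ?D \<omega> / (1 + other_accesses T t \<omega>)) = 0"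
    using indep_var_lebesgue_integral[OF indep intD(1) intH] intD(2) by simp
qed

lemma expectation_rbar:
  "expectation (rbar N n U A \<nu> j) = mu * prob {\<omega> \<in> space M. accesses (steps_upto j) \<omega> \<noteq> 0}"
proof -
  define T where "T = steps_upto j"
  let ?E = "{\<omega> \<in> space M. accesses T \<omega> \<noteq> 0}"
  have "expectation (rbar N n U A \<nu> j) = expectation (\<lambda>\<omega>. mu * indicator ?E \<omega>
      + (\<Sum>t<T. (centered_share t \<omega> + acc_noise t \<omega>) / (1 + other_accesses T t \<omega>)))"
    by (intro Bochner_Integration.integral_cong)
      (simp_all add: rbar_eq sum_div_other_accesses T_def indicator_def)
  also have "\<dots> = mu * expectation (indicator ?E)
      + (\<Sum>t<T. expectation (\<lambda>\<omega>. (centered_share t \<omega> + acc_noise t \<omega>) / (1 + other_accesses T t \<omega>)))"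
    by (subst Bochner_Integration.integral_add)
      (auto simp: Bochner_Integration.integral_sum integrable_deviation_div_other_accesses
        emeasure_eq_measure)
  also have "\<dots> = mu * prob ?E"
    by (simp add: expectation_deviation_div_other_accesses)
  finally show ?thesis
    unfolding T_def .
qed

lemma prob_accesses_ne_zero_ge:
  assumes "0 < T"
  shows "1 - exp (- (real T / 8)) \<le> prob {\<omega> \<in> space M. accesses T \<omega> \<noteq> 0}"
proof -
  have "prob (space M - {\<omega> \<in> space M. accesses T \<omega> \<le> real T / 4}) \<le> prob {\<omega> \<in> space M. accesses T \<omega> \<noteq> 0}"
    using assms by (intro finite_measure_mono) auto
  then show ?thesis
    using prob_accesses_le[of T] prob_compl[of "{\<omega> \<in> space M. accesses T \<omega> \<le> real T / 4}"] by simp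
qed

lemma abs_rbar_deviation_le:
  fixes \<epsilon> :: real and j :: nat
  defines "T \<equiv> steps_upto j"
  assumes \<epsilon>: "\<epsilon> \<le> 1" and p: "1 - \<epsilon> / 4 \<le> prob {\<omega> \<in> space M. accesses T \<omega> \<noteq> 0}"
    and S: "real T / 4 < accesses T \<omega>"
    and W: "\<bar>\<Sum>t<T. centered_share t \<omega>\<bar> < real T * (\<epsilon> * mu / 32)"
    and z: "\<bar>\<Sum>t<T. acc_noise t \<omega>\<bar> < real T * (\<epsilon> * mu / 32)"
  shows "\<bar>rbar N n U A \<nu> j \<omega> - expectation (rbar N n U A \<nu> j)\<bar> \<le> \<epsilon> * expectation (rbar N n U A \<nu> j)"
proof -
  have T: "0 < real T"
    using S accesses_def by (cases "T = 0") auto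
  have "\<bar>(\<Sum>t<T. centered_share t \<omega>) + (\<Sum>t<T. acc_noise t \<omega>)\<bar> < real T * (\<epsilon> * mu / 16)"
    using W z abs_triangle_ineq[of "\<Sum>t<T. centered_share t \<omega>" "\<Sum>t<T. acc_noise t \<omega>"] by simp
  moreover have "accesses T \<omega> \<noteq> 0"
    using S T by auto
  ultimately show ?thesis
    unfolding expectation_rbar rbar_eq T_def[symmetric]
    using abs_relative_error_le[OF mu_pos T \<epsilon> p _ S] by simp
qed

lemma prob_rbar_deviation_le:
  fixes \<epsilon> :: real
  assumes \<epsilon>: "0 < \<epsilon>" "\<epsilon> \<le> 1"
    and T: "0 < steps_upto j" and large: "exp (- (real (steps_upto j) / 8)) \<le> \<epsilon> / 4"
  defines "\<delta> \<equiv> \<epsilon> * mu / 32"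
  shows "prob {\<omega> \<in> space M. \<bar>rbar N n U A \<nu> j \<omega> - expectation (rbar N n U A \<nu> j)\<bar>
      > \<epsilon> * expectation (rbar N n U A \<nu> j)}
    \<le> exp (- (real (steps_upto j) / 8))
      + 2 * exp (- (real (steps_upto j) * \<delta>\<^sup>2 / (2 * ((U + mu)\<^sup>2 / 4))))
      + 2 * exp (- (real (steps_upto j) * \<delta>\<^sup>2 / (2 * (b + 1))))"
proof -
  define T where "T = steps_upto j"
  define B1 where "B1 = {\<omega> \<in> space M. accesses T \<omega> \<le> real T / 4}"
  define B2 where "B2 = {\<omega> \<in> space M. real T * \<delta> \<le> \<bar>\<Sum>t<T. centered_share t \<omega>\<bar>}"
  define B3 where "B3 = {\<omega> \<in> space M. real T * \<delta> \<le> \<bar>\<Sum>t<T. acc_noise t \<omega>\<bar>}"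
  have [measurable]: "B1 \<in> sets M" "B2 \<in> sets M" "B3 \<in> sets M"
    unfolding B1_def B2_def B3_def by measurable
  have p: "1 - \<epsilon> / 4 \<le> prob {\<omega> \<in> space M. accesses (steps_upto j) \<omega> \<noteq> 0}"
    using prob_accesses_ne_zero_ge[OF T] large by linarith
  have "{\<omega> \<in> space M. \<bar>rbar N n U A \<nu> j \<omega> - expectation (rbar N n U A \<nu> j)\<bar>
      > \<epsilon> * expectation (rbar N n U A \<nu> j)} \<subseteq> B1 \<union> B2 \<union> B3"
  proof (rule subsetI, rule ccontr)
    fix \<omega>
    assume "\<omega> \<in> {\<omega> \<in> space M. \<bar>rbar N n U A \<nu> j \<omega> - expectation (rbar N n U A \<nu> j)\<bar>
        > \<epsilon> * expectation (rbar N n U A \<nu> j)}" and "\<omega> \<notin> B1 \<union> B2 \<union> B3"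
    then show False
      using abs_rbar_deviation_le[OF \<epsilon>(2) p, of \<omega>] by (auto simp: B1_def B2_def B3_def T_def \<delta>_def not_le)
  qed
  then have "prob {\<omega> \<in> space M. \<bar>rbar N n U A \<nu> j \<omega> - expectation (rbar N n U A \<nu> j)\<bar>
      > \<epsilon> * expectation (rbar N n U A \<nu> j)} \<le> prob (B1 \<union> B2 \<union> B3)"
    by (intro finite_measure_mono) auto
  also have "\<dots> \<le> prob B1 + prob B2 + prob B3"
    by (meson measure_Un_le add_right_mono order_trans sets.Un \<open>B1 \<in> sets M\<close> \<open>B2 \<in> sets M\<close> \<open>B3 \<in> sets M\<close>)
  also have "\<dots> \<le> exp (- (real T / 8))
      + 2 * exp (- (real T * \<delta>\<^sup>2 / (2 * ((U + mu)\<^sup>2 / 4))))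
      + 2 * exp (- (real T * \<delta>\<^sup>2 / (2 * (b + 1))))"
    unfolding B1_def B2_def B3_def using \<epsilon> mu_pos
    by (intro add_mono prob_accesses_le prob_sum_centered_share_ge prob_sum_acc_noise_ge) (simp_all add: \<delta>_def)
  finally show ?thesis
    unfolding T_def .
qed

lemma rbar_deviation_bigo:
  fixes \<epsilon> :: real
  assumes \<epsilon>: "0 < \<epsilon>" "\<epsilon> \<le> 1"
  shows "(\<lambda>j. prob {\<omega> \<in> space M. \<bar>rbar N n U A \<nu> j \<omega> - expectation (rbar N n U A \<nu> j)\<bar>
      > \<epsilon> * expectation (rbar N n U A \<nu> j)}) \<in> O(\<lambda>j. exp (- (real j powr 1.4)))"
proof -
  define \<delta> where "\<delta> = \<epsilon> * mu / 32"
  define g where "g j = exp (- (real (steps_upto j) / 8))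
      + 2 * exp (- (real (steps_upto j) * \<delta>\<^sup>2 / (2 * ((U + mu)\<^sup>2 / 4))))
      + 2 * exp (- (real (steps_upto j) * \<delta>\<^sup>2 / (2 * (b + 1))))" for j
  have "eventually (\<lambda>j. 0 < steps_upto j \<and> exp (- (real (steps_upto j) / 8)) < \<epsilon> / 4) sequentially"
    using \<epsilon> by (intro eventually_steps_upto_large) simp
  then have "eventually (\<lambda>j. norm (prob {\<omega> \<in> space M.
      \<bar>rbar N n U A \<nu> j \<omega> - expectation (rbar N n U A \<nu> j)\<bar> > \<epsilon> * expectation (rbar N n U A \<nu> j)})
      \<le> norm (g j)) sequentially"
  proof eventually_elim
    case (elim j)
    then have "prob {\<omega> \<in> space M. \<bar>rbar N n U A \<nu> j \<omega> - expectation (rbar N n U A \<nu> j)\<bar>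
        > \<epsilon> * expectation (rbar N n U A \<nu> j)} \<le> g j"
      unfolding g_def \<delta>_def using elim by (intro prob_rbar_deviation_le[OF \<epsilon>]) simp_all
    then show ?case
      by (simp add: order_trans[OF _ abs_ge_self])
  qed
  then have "(\<lambda>j. prob {\<omega> \<in> space M.
      \<bar>rbar N n U A \<nu> j \<omega> - expectation (rbar N n U A \<nu> j)\<bar> > \<epsilon> * expectation (rbar N n U A \<nu> j)})
      \<in> O(g)"
    by (rule landau_o.big_mono)
  moreover have "g \<in> O(\<lambda>j. exp (- (real j powr 1.4)))"
  proof -
    have "0 < \<delta>\<^sup>2 / (2 * ((U + mu)\<^sup>2 / 4))" "0 < \<delta>\<^sup>2 / (2 * (b + 1))"
      using \<epsilon> mu_pos U_pos subgaussian_nonneg[OF subgaussian_noise[OF agent]] by (simp_all add: \<delta>_def)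
    note rates = exp_steps_upto_bigo[of "1 / 8", unfolded times_divide_eq_right mult_1_right]
      exp_steps_upto_bigo[OF this(1), unfolded times_divide_eq_right]
      exp_steps_upto_bigo[OF this(2), unfolded times_divide_eq_right]
    show ?thesis
      unfolding g_def times_divide_eq_right
      by (intro sum_in_bigo rates landau_o.big.cmult_in_iff[THEN iffD2]) simp_all
  qed
  ultimately show ?thesis
    by (rule landau_o.big_trans)
qed

end

theorem lemma6:
  fixes M :: "'a measure"
    and N n :: nat and U b :: real
    and A :: "nat \<Rightarrow> nat \<Rightarrow> 'a \<Rightarrow> bool"   \<comment> \<open>A t k: agent k accesses resource 1 at step t\<close>
    and \<nu> :: "nat \<Rightarrow> nat \<Rightarrow> 'a \<Rightarrow> real"   \<comment> \<open>noise of agent k at step t\<close>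
  assumes M: "prob_space M"
    and n: "n < N"
    and U: "0 < U"
    and indep: "prob_space.indep_vars M (\<lambda>_. borel)
        (\<lambda>i \<omega>. case i of Inl (t, k) \<Rightarrow> of_bool (A t k \<omega>) | Inr (t, k) \<Rightarrow> \<nu> t k \<omega>)
        {i. case i of Inl (t, k) \<Rightarrow> k < N | Inr (t, k) \<Rightarrow> k < N}"
    and access: "\<And>t k. k < N \<Longrightarrow> measure M {\<omega> \<in> space M. A t k \<omega>} = 1 / 2"
    and noise: "\<And>t k. k < N \<Longrightarrow> subgaussian M (\<nu> t k) b"
    and ident: "\<And>t k. k < N \<Longrightarrow> distr M borel (\<nu> t k) = distr M borel (\<nu> 0 0)"
  shows "(\<lambda>j. measure M {\<omega> \<in> space M.
            \<bar>rbar N n U A \<nu> j \<omega> - integral\<^sup>L M (rbar N n U A \<nu> j)\<bar>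
              > (1 / 2) ^ (N + 4) * integral\<^sup>L M (rbar N n U A \<nu> j)})
         \<in> O(\<lambda>j. exp (- (real j powr 1.4)))"
proof -
  interpret prob_space M
    by (rule M)
  interpret ene_block M N n U b A \<nu>
    using n U indep access noise by unfold_locales (simp_all add: model_vars_def)
  show ?thesis
    by (rule rbar_deviation_bigo) (simp_all add: power_le_one)
qed

end
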